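(* Every finite chordal trigraph admits a tree representation.
   Context: A trigraph is a triple $H'=(V,E_B,E_R)$ where $E_B,E_R$ are disjoint subsets of $\binom V2$, called black and red edges. For $u\ne v\in V$, the adjacency type of $uv$ is `black' if $uv\in E_B$, `red' if $uv\in E_R$, and `non-edge' otherwise. The total graph of $H'$ is $\mathcal T(H')=(V,E_B\cup E_R)$; $H'$ is chordal if its total graph has no induced cycle of length at least $4$. In a rooted tree, a node is its own ancestor and descendant; $\mathrm{ancestors}(v)$, $\mathrm{desc}(v)$, $\mathrm{parent}(v)$ have the usual meaning, and siblings are distinct nodes with the same parent. A tree representation of a chordal trigraph $H'$ with $H:=\mathcal T(H')$ is a rooted tree $T$ with $V(T)=V(H)$ (not necessarily a subgraph of $H$) such that: (1) for every $v\in V(H)$, $N_H(v)\cap \mathrm{ancestors}(v)$ is a clique in $H$; (2) for every non-root $v$, $N_H(v)\subseteq \mathrm{desc}(v)\cup(\mathrm{ancestors}(v)\cap N_H[\mathrm{parent}(v)])$; (3) if $u$ and $v$ are siblings in $T$, then $u$ and $v$ have a common ancestor $x$ such that $ux$ and $vx$ have distinct adjacency types in $H'$. *)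

theory Defs
  imports Main
begin

definition trigraph :: "'a set \<Rightarrow> 'a set set \<Rightarrow> 'a set set \<Rightarrow> bool" where
  "trigraph V EB ER \<longleftrightarrow>
     EB \<subseteq> {e. \<exists>u v. e = {u, v} \<and> u \<noteq> v \<and> u \<in> V \<and> v \<in> V} \<and>
     ER \<subseteq> {e. \<exists>u v. e = {u, v} \<and> u \<noteq> v \<and> u \<in> V \<and> v \<in> V} \<and>
     EB \<inter> ER = {}"

datatype adj_type = Black | Red | NonEdge

definition adjtype :: "'a set set \<Rightarrow> 'a set set \<Rightarrow> 'a \<Rightarrow> 'a \<Rightarrow> adj_type" where
  "adjtype EB ER u v =
     (if {u, v} \<in> EB then Black else if {u, v} \<in> ER then Red else NonEdge)"

definition tadj :: "'a set set \<Rightarrow> 'a set set \<Rightarrow> 'a \<Rightarrow> 'a \<Rightarrow> bool" where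
  "tadj EB ER u v \<longleftrightarrow> u \<noteq> v \<and> {u, v} \<in> EB \<union> ER"

definition nbhd :: "'a set \<Rightarrow> 'a set set \<Rightarrow> 'a set set \<Rightarrow> 'a \<Rightarrow> 'a set" where
  "nbhd V EB ER v = {u \<in> V. tadj EB ER v u}"

definition cnbhd :: "'a set \<Rightarrow> 'a set set \<Rightarrow> 'a set set \<Rightarrow> 'a \<Rightarrow> 'a set" where
  "cnbhd V EB ER v = insert v (nbhd V EB ER v)"

definition is_clique :: "'a set set \<Rightarrow> 'a set set \<Rightarrow> 'a set \<Rightarrow> bool" where
  "is_clique EB ER S \<longleftrightarrow> (\<forall>x\<in>S. \<forall>y\<in>S. x \<noteq> y \<longrightarrow> tadj EB ER x y)"

definition induced_cycle :: "'a set \<Rightarrow> 'a set set \<Rightarrow> 'a set set \<Rightarrow> 'a list \<Rightarrow> bool" where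
  "induced_cycle V EB ER cs \<longleftrightarrow>
     (let k = length cs in
       k \<ge> 4 \<and> distinct cs \<and> set cs \<subseteq> V \<and>
       (\<forall>i<k. tadj EB ER (cs ! i) (cs ! ((i + 1) mod k))) \<and>
       (\<forall>i<k. \<forall>j<k. i \<noteq> j \<and> j \<noteq> (i + 1) mod k \<and> i \<noteq> (j + 1) mod k
            \<longrightarrow> \<not> tadj EB ER (cs ! i) (cs ! j)))"

definition chordal_trigraph :: "'a set \<Rightarrow> 'a set set \<Rightarrow> 'a set set \<Rightarrow> bool" where
  "chordal_trigraph V EB ER \<longleftrightarrow> \<not> (\<exists>cs. induced_cycle V EB ER cs)"

text \<open>A rooted tree on vertex set V is encoded by a root r and a parent map par;
  by convention par r = r, and every vertex reaches r by iterating par.\<close>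
definition rooted_tree :: "'a set \<Rightarrow> 'a \<Rightarrow> ('a \<Rightarrow> 'a) \<Rightarrow> bool" where
  "rooted_tree V r par \<longleftrightarrow>
     r \<in> V \<and> par r = r \<and> (\<forall>v\<in>V. par v \<in> V) \<and>
     (\<forall>v\<in>V. \<exists>k. (par ^^ k) v = r)"

text \<open>Ancestors include the node itself.\<close>
definition ancestors :: "('a \<Rightarrow> 'a) \<Rightarrow> 'a \<Rightarrow> 'a set" where
  "ancestors par v = {u. \<exists>k. (par ^^ k) v = u}"

definition descendants :: "'a set \<Rightarrow> ('a \<Rightarrow> 'a) \<Rightarrow> 'a \<Rightarrow> 'a set" where
  "descendants V par v = {u \<in> V. v \<in> ancestors par u}"

definition siblings :: "'a \<Rightarrow> ('a \<Rightarrow> 'a) \<Rightarrow> 'a \<Rightarrow> 'a \<Rightarrow> bool" where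
  "siblings r par u v \<longleftrightarrow> u \<noteq> v \<and> u \<noteq> r \<and> v \<noteq> r \<and> par u = par v"

definition tree_representation ::
  "'a set \<Rightarrow> 'a set set \<Rightarrow> 'a set set \<Rightarrow> 'a \<Rightarrow> ('a \<Rightarrow> 'a) \<Rightarrow> bool" where
  "tree_representation V EB ER r par \<longleftrightarrow>
     rooted_tree V r par \<and>
     (\<forall>v\<in>V. is_clique EB ER (nbhd V EB ER v \<inter> ancestors par v)) \<and>
     (\<forall>v\<in>V. v \<noteq> r \<longrightarrow>
        nbhd V EB ER v \<subseteq> descendants V par v \<union>
                          (ancestors par v \<inter> cnbhd V EB ER (par v))) \<and>
     (\<forall>u\<in>V. \<forall>v\<in>V. siblings r par u v \<longrightarrow>
        (\<exists>x \<in> ancestors par u \<inter> ancestors par v.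
           adjtype EB ER u x \<noteq> adjtype EB ER v x))"

end

theory Submission
  imports Defs
begin

text \<open>A chordal graph has a simplicial vertex \<open>s\<close>, one whose neighbourhood \<open>N(s)\<close> is a
  clique, and the tree representation is built by induction on the number of vertices, adding
  \<open>s\<close> to a representation of the remaining graph. A clique lies on the root path of its deepest
  vertex, so some vertex \<open>p\<close> has \<open>N(s)\<close> among both its ancestors and its closed neighbourhood;
  \<open>s\<close> becomes a child of the deepest such \<open>p\<close>. Conditions (1) and (2) hold because \<open>N(s)\<close> is a
  clique of ancestors of \<open>s\<close> adjacent or equal to \<open>p\<close>. For (3), a child \<open>c\<close> of \<open>p\<close> having the
  same adjacency type as \<open>s\<close> to every ancestor of \<open>p\<close> would qualify as well and be deeper than
  \<open>p\<close>; hence some ancestor of \<open>p\<close> distinguishes \<open>c\<close> from \<open>s\<close>.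

  Simplicial vertices exist by Dirac's argument. If \<open>u\<close> is not adjacent to \<open>v\<close>, let \<open>C\<close> be the
  component of \<open>u\<close> after deleting the closed neighbourhood of \<open>v\<close>. The vertices outside \<open>C\<close>
  adjacent to \<open>C\<close> are neighbours of \<open>v\<close>, and they form a clique: two non-adjacent ones would
  close an induced cycle through \<open>v\<close> and a shortest path across \<open>C\<close>. By induction the smaller
  chordal graph on \<open>C\<close> and these vertices is complete or has two non-adjacent simplicial
  vertices, which cannot both lie in that clique; so it has a simplicial vertex in \<open>C\<close>, and
  this vertex is simplicial in the whole graph as well.\<close>

definition simplicial :: "'a set \<Rightarrow> 'a set set \<Rightarrow> 'a set set \<Rightarrow> 'a \<Rightarrow> bool" where
  "simplicial V EB ER v \<longleftrightarrow> is_clique EB ER (nbhd V EB ER v)"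

lemma tadj_commute: "tadj EB ER u v \<longleftrightarrow> tadj EB ER v u"
  unfolding tadj_def by (auto simp: insert_commute)

lemma tadj_irrefl [simp]: "\<not> tadj EB ER v v"
  unfolding tadj_def by simp

lemma tadj_iff_adjtype: "tadj EB ER u v \<longleftrightarrow> u \<noteq> v \<and> adjtype EB ER u v \<noteq> NonEdge"
  unfolding tadj_def adjtype_def by auto

lemma cnbhd_commute: "u \<in> V \<Longrightarrow> v \<in> V \<Longrightarrow> u \<in> cnbhd V EB ER v \<longleftrightarrow> v \<in> cnbhd V EB ER u"
  unfolding cnbhd_def nbhd_def by (auto simp: tadj_commute)

lemma is_clique_subset: "is_clique EB ER A \<Longrightarrow> B \<subseteq> A \<Longrightarrow> is_clique EB ER B"
  unfolding is_clique_def by blast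

lemma simplicial_if_complete:
  assumes "\<forall>a\<in>V. V \<subseteq> cnbhd V EB ER a"
  shows "simplicial V EB ER s"
  unfolding simplicial_def is_clique_def
proof (intro ballI impI)
  fix x y assume "x \<in> nbhd V EB ER s" "y \<in> nbhd V EB ER s" "x \<noteq> y"
  then have "y \<in> cnbhd V EB ER x" using assms unfolding nbhd_def by blast
  then show "tadj EB ER x y" using \<open>x \<noteq> y\<close> unfolding cnbhd_def nbhd_def by simp
qed

lemma chordal_trigraph_subset:
  "chordal_trigraph V EB ER \<Longrightarrow> V' \<subseteq> V \<Longrightarrow> chordal_trigraph V' EB ER"
  unfolding chordal_trigraph_def induced_cycle_def Let_def by blast

subsection \<open>Rooted trees\<close>

lemma funpow_fixpoint: "f x = x \<Longrightarrow> (f ^^ n) x = x"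
  by (induction n) auto

lemma ancestors_refl: "v \<in> ancestors par v"
  unfolding ancestors_def by (auto intro: exI[of _ 0])

lemma ancestors_unfold: "ancestors par v = insert v (ancestors par (par v))"
proof (rule set_eqI)
  fix u
  have "(\<exists>k. (par ^^ k) v = u) \<longleftrightarrow> v = u \<or> (\<exists>k. (par ^^ Suc k) v = u)"
    by (metis funpow_0 not0_implies_Suc)
  then show "u \<in> ancestors par v \<longleftrightarrow> u \<in> insert v (ancestors par (par v))"
    unfolding ancestors_def by (simp only: funpow_Suc_right o_apply mem_Collect_eq insert_iff eq_commute)
qed

lemma parent_in_ancestors: "par v \<in> ancestors par v"
  by (subst ancestors_unfold) (simp add: ancestors_refl)

lemma ancestors_trans: "u \<in> ancestors par v \<Longrightarrow> w \<in> ancestors par u \<Longrightarrow> w \<in> ancestors par v"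
  unfolding ancestors_def by (auto simp flip: funpow_add[THEN fun_cong, unfolded o_apply])

lemma ancestors_subset:
  assumes "rooted_tree V r par" "v \<in> V"
  shows "ancestors par v \<subseteq> V"
proof -
  have "(par ^^ k) v \<in> V" for k
    using assms unfolding rooted_tree_def by (induction k) auto
  then show ?thesis unfolding ancestors_def by auto
qed

lemma root_in_ancestors: "rooted_tree V r par \<Longrightarrow> v \<in> V \<Longrightarrow> r \<in> ancestors par v"
  unfolding rooted_tree_def ancestors_def by auto

lemma rooted_tree_periodic_root:
  assumes rt: "rooted_tree V r par" and v: "v \<in> V" and period: "(par ^^ Suc n) v = v"
  shows "v = r"
proof -
  obtain k where k: "(par ^^ k) v = r" using rt v unfolding rooted_tree_def by auto
  have "v = ((par ^^ Suc n) ^^ k) v" using funpow_fixpoint[of "par ^^ Suc n", OF period] by simp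
  also have "\<dots> = (par ^^ (n * k + k)) v"
    by (simp only: funpow_mult mult_Suc add.commute)
  also have "\<dots> = (par ^^ (n * k)) r"
    using k by (simp only: funpow_add o_apply)
  also have "\<dots> = r" using funpow_fixpoint[of par r] rt unfolding rooted_tree_def by simp
  finally show ?thesis .
qed

lemma not_in_ancestors_parent:
  assumes "rooted_tree V r par" "c \<in> V" "c \<noteq> r"
  shows "c \<notin> ancestors par (par c)"
proof
  assume "c \<in> ancestors par (par c)"
  then obtain k where "(par ^^ Suc k) c = c" unfolding ancestors_def by (auto simp: funpow_swap1)
  then show False using rooted_tree_periodic_root assms by metis
qed

lemma card_ancestors_child:
  assumes rt: "rooted_tree V r par" and "finite V" "c \<in> V" "c \<noteq> r"
  shows "card (ancestors par c) = Suc (card (ancestors par (par c)))"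
proof -
  have "par c \<in> V" using rt \<open>c \<in> V\<close> unfolding rooted_tree_def by auto
  then have "finite (ancestors par (par c))"
    using ancestors_subset[OF rt] \<open>finite V\<close> finite_subset by metis
  then show ?thesis using ancestors_unfold[of par c] not_in_ancestors_parent[OF assms(1,3,4)] by simp
qed

lemma exists_deepest:
  assumes rt: "rooted_tree V r par" and "finite V" "Q \<subseteq> V" "Q \<noteq> {}"
  shows "\<exists>p\<in>Q. \<forall>q\<in>Q. card (ancestors par q) \<le> card (ancestors par p)"
proof -
  have bound: "\<forall>q. q \<in> Q \<longrightarrow> card (ancestors par q) < Suc (card V)"
    using card_mono[OF \<open>finite V\<close> ancestors_subset[OF rt]] \<open>Q \<subseteq> V\<close>
    by (simp add: less_Suc_eq_le subset_iff)
  obtain q0 where "q0 \<in> Q" using \<open>Q \<noteq> {}\<close> by blast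
  then show ?thesis using ex_has_greatest_nat[of "\<lambda>q. q \<in> Q", OF _ bound] by blast
qed

lemma ancestors_fun_upd_other:
  assumes "rooted_tree V r par" "v \<in> V" "s \<notin> V"
  shows "ancestors (par(s := p)) v = ancestors par v"
proof -
  have "((par(s := p)) ^^ k) v = (par ^^ k) v" for k
  proof (induction k)
    case (Suc k)
    have "(par ^^ k) v \<noteq> s" using ancestors_subset[OF assms(1,2)] assms(3)
      unfolding ancestors_def by auto
    then show ?case using Suc by simp
  qed simp
  then show ?thesis unfolding ancestors_def by simp
qed

lemma ancestors_fun_upd_new:
  assumes "rooted_tree V r par" "s \<notin> V" "p \<in> V"
  shows "ancestors (par(s := p)) s = insert s (ancestors par p)"
  using ancestors_unfold[of "par(s := p)" s] ancestors_fun_upd_other[OF assms(1,3,2)] by simp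

lemma rooted_tree_fun_upd:
  assumes rt: "rooted_tree V r par" and "s \<notin> V" "p \<in> V"
  shows "rooted_tree (insert s V) r (par(s := p))"
proof -
  have "r \<in> ancestors (par(s := p)) v" if "v \<in> insert s V" for v
    using that ancestors_fun_upd_other[OF rt _ \<open>s \<notin> V\<close>] root_in_ancestors[OF rt] \<open>p \<in> V\<close>
      ancestors_fun_upd_new[OF assms] by auto
  then show ?thesis using assms unfolding rooted_tree_def ancestors_def by auto
qed

subsection \<open>Adding a simplicial vertex to a tree representation\<close>

lemma clique_in_ancestors_of_deepest:
  assumes tr: "tree_representation V EB ER r par" and "finite V"
    and K: "K \<subseteq> V" "is_clique EB ER K" "k \<in> K"
    and deepest: "\<forall>y\<in>K. card (ancestors par y) \<le> card (ancestors par k)"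
  shows "K \<subseteq> ancestors par k"
proof
  fix x assume "x \<in> K"
  have rt: "rooted_tree V r par" using tr unfolding tree_representation_def by simp
  have "k \<in> V" "x \<in> V" using K \<open>x \<in> K\<close> by auto
  show "x \<in> ancestors par k"
  proof (cases "x = k \<or> x = r")
    case True
    then show ?thesis using ancestors_refl root_in_ancestors[OF rt \<open>k \<in> V\<close>] by auto
  next
    case False
    then have "k \<in> nbhd V EB ER x" "x \<noteq> r"
      using K \<open>x \<in> K\<close> unfolding is_clique_def nbhd_def by auto
    then have "k \<in> descendants V par x \<or> k \<in> ancestors par x"
      using tr \<open>x \<in> V\<close> unfolding tree_representation_def by blast
    then show ?thesis
    proof
      assume "k \<in> descendants V par x"
      then show ?thesis unfolding descendants_def by simp
    next
      assume "k \<in> ancestors par x"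
      then have sub: "ancestors par k \<subseteq> ancestors par x" using ancestors_trans by fast
      show ?thesis
      proof (rule ccontr)
        assume "x \<notin> ancestors par k"
        then have "ancestors par k \<subset> ancestors par x" using sub ancestors_refl by fast
        moreover have "finite (ancestors par x)"
          using ancestors_subset[OF rt \<open>x \<in> V\<close>] \<open>finite V\<close> finite_subset by metis
        ultimately have "card (ancestors par k) < card (ancestors par x)" by (rule psubset_card_mono[rotated])
        then show False using deepest \<open>x \<in> K\<close> by fastforce
      qed
    qed
  qed
qed

lemma clique_on_branch:
  assumes tr: "tree_representation V EB ER r par" and "finite V"
    and K: "K \<subseteq> V" "is_clique EB ER K"
  shows "\<exists>p\<in>V. K \<subseteq> ancestors par p \<inter> cnbhd V EB ER p"
proof (cases "K = {}")
  case True
  then show ?thesis using tr unfolding tree_representation_def rooted_tree_def by auto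
next
  case False
  have rt: "rooted_tree V r par" using tr unfolding tree_representation_def by simp
  obtain k where "k \<in> K" and deepest: "\<forall>y\<in>K. card (ancestors par y) \<le> card (ancestors par k)"
    using exists_deepest[OF rt \<open>finite V\<close> K(1) False] by blast
  have "K \<subseteq> ancestors par k"
    using clique_in_ancestors_of_deepest[OF tr \<open>finite V\<close> K \<open>k \<in> K\<close> deepest] .
  moreover have "K \<subseteq> cnbhd V EB ER k"
    using K \<open>k \<in> K\<close> unfolding is_clique_def cnbhd_def nbhd_def by (auto simp: tadj_commute)
  ultimately show ?thesis using \<open>k \<in> K\<close> K(1) by blast
qed

lemma attach_leaf_clique_condition:
  assumes tr: "tree_representation V EB ER r par" and "s \<notin> V"
    and simp_s: "simplicial (insert s V) EB ER s" and "v \<in> insert s V"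
  shows "is_clique EB ER (nbhd (insert s V) EB ER v \<inter> ancestors (par(s := p)) v)"
proof (cases "v = s")
  case True
  then show ?thesis using simp_s is_clique_subset unfolding simplicial_def by blast
next
  case False
  then have "v \<in> V" using \<open>v \<in> insert s V\<close> by simp
  have rt: "rooted_tree V r par" using tr unfolding tree_representation_def by simp
  have "nbhd (insert s V) EB ER v \<inter> ancestors (par(s := p)) v \<subseteq> nbhd V EB ER v \<inter> ancestors par v"
    using ancestors_fun_upd_other[OF rt \<open>v \<in> V\<close> \<open>s \<notin> V\<close>] ancestors_subset[OF rt \<open>v \<in> V\<close>] \<open>s \<notin> V\<close>
    unfolding nbhd_def by blast
  then show ?thesis using tr \<open>v \<in> V\<close> is_clique_subset unfolding tree_representation_def by blast
qed

lemma attach_leaf_neighbour_condition: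
  assumes tr: "tree_representation V EB ER r par" and "s \<notin> V" "p \<in> V"
    and nbhd_s: "nbhd (insert s V) EB ER s \<subseteq> ancestors par p \<inter> cnbhd V EB ER p"
    and "v \<in> insert s V" "v \<noteq> r"
  shows "nbhd (insert s V) EB ER v \<subseteq> descendants (insert s V) (par(s := p)) v \<union>
    (ancestors (par(s := p)) v \<inter> cnbhd (insert s V) EB ER ((par(s := p)) v))"
proof -
  let ?W = "insert s V" and ?par = "par(s := p)"
  have rt: "rooted_tree V r par" using tr unfolding tree_representation_def by simp
  have anc_V: "ancestors ?par w = ancestors par w" if "w \<in> V" for w
    using ancestors_fun_upd_other[OF rt that \<open>s \<notin> V\<close>] .
  have anc_s: "ancestors ?par s = insert s (ancestors par p)"
    using ancestors_fun_upd_new[OF rt \<open>s \<notin> V\<close> \<open>p \<in> V\<close>] .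
  show ?thesis
  proof (cases "v = s")
    case True
    have "cnbhd V EB ER p \<subseteq> cnbhd ?W EB ER p" unfolding cnbhd_def nbhd_def by auto
    then have "nbhd ?W EB ER s \<subseteq> ancestors ?par s \<inter> cnbhd ?W EB ER (?par s)"
      using nbhd_s anc_s by auto
    then show ?thesis using True by blast
  next
    case False
    then have "v \<in> V" using \<open>v \<in> ?W\<close> by simp
    have old: "nbhd V EB ER v \<subseteq> descendants V par v \<union> (ancestors par v \<inter> cnbhd V EB ER (par v))"
      using tr \<open>v \<in> V\<close> \<open>v \<noteq> r\<close> unfolding tree_representation_def by blast
    show ?thesis
    proof
      fix u assume u: "u \<in> nbhd ?W EB ER v"
      show "u \<in> descendants ?W ?par v \<union> (ancestors ?par v \<inter> cnbhd ?W EB ER (?par v))"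
      proof (cases "u = s")
        case True
        then have "v \<in> ancestors par p" using u nbhd_s \<open>v \<in> V\<close> unfolding nbhd_def by (auto simp: tadj_commute)
        then show ?thesis using True anc_s unfolding descendants_def by simp
      next
        case False
        then have "u \<in> descendants V par v \<union> (ancestors par v \<inter> cnbhd V EB ER (par v))"
          using u old unfolding nbhd_def by blast
        then show ?thesis
          using anc_V \<open>v \<in> V\<close> \<open>v \<noteq> s\<close> unfolding descendants_def cnbhd_def nbhd_def by auto
      qed
    qed
  qed
qed

lemma attach_leaf_new_sibling_differs:
  assumes rt: "rooted_tree V r par" and "s \<notin> V" "p \<in> V"
    and children_differ: "\<And>c. c \<in> V \<Longrightarrow> c \<noteq> r \<Longrightarrow> par c = p \<Longrightarrow>
      \<exists>x\<in>ancestors par p. adjtype EB ER c x \<noteq> adjtype EB ER s x"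
    and "c \<in> V" "siblings r (par(s := p)) s c"
  shows "\<exists>x\<in>ancestors (par(s := p)) s \<inter> ancestors (par(s := p)) c. adjtype EB ER s x \<noteq> adjtype EB ER c x"
proof -
  have "par c = p" "c \<noteq> r" using assms(6) unfolding siblings_def by auto
  then obtain x where "x \<in> ancestors par p" "adjtype EB ER c x \<noteq> adjtype EB ER s x"
    using children_differ \<open>c \<in> V\<close> by blast
  moreover have "ancestors par p \<subseteq> ancestors par c"
    using parent_in_ancestors[of par c] \<open>par c = p\<close> ancestors_trans by fast
  ultimately show ?thesis
    using ancestors_fun_upd_new[OF rt \<open>s \<notin> V\<close> \<open>p \<in> V\<close>]
      ancestors_fun_upd_other[OF rt \<open>c \<in> V\<close> \<open>s \<notin> V\<close>, of p]
    by (intro bexI[of _ x]) auto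
qed

lemma attach_leaf_sibling_condition:
  assumes tr: "tree_representation V EB ER r par" and "s \<notin> V" "p \<in> V"
    and children_differ: "\<And>c. c \<in> V \<Longrightarrow> c \<noteq> r \<Longrightarrow> par c = p \<Longrightarrow>
      \<exists>x\<in>ancestors par p. adjtype EB ER c x \<noteq> adjtype EB ER s x"
    and "u \<in> insert s V" "v \<in> insert s V" and sib: "siblings r (par(s := p)) u v"
  shows "\<exists>x\<in>ancestors (par(s := p)) u \<inter> ancestors (par(s := p)) v. adjtype EB ER u x \<noteq> adjtype EB ER v x"
proof -
  let ?par = "par(s := p)"
  have rt: "rooted_tree V r par" using tr unfolding tree_representation_def by simp
  have anc_V: "ancestors ?par w = ancestors par w" if "w \<in> V" for w
    using ancestors_fun_upd_other[OF rt that \<open>s \<notin> V\<close>] .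
  have s_differs: "\<exists>x\<in>ancestors ?par s \<inter> ancestors ?par c. adjtype EB ER s x \<noteq> adjtype EB ER c x"
    if "c \<in> V" "siblings r ?par s c" for c
    using rt \<open>s \<notin> V\<close> \<open>p \<in> V\<close> children_differ that by (rule attach_leaf_new_sibling_differs)
  consider "u = s" | "v = s" | "u \<in> V" "v \<in> V" using \<open>u \<in> insert s V\<close> \<open>v \<in> insert s V\<close> by auto
  then show ?thesis
  proof cases
    case 1
    then have "v \<in> V" "siblings r ?par s v"
      using \<open>v \<in> insert s V\<close> sib unfolding siblings_def by auto
    from s_differs[OF this] show ?thesis using 1 by simp
  next
    case 2
    then have "u \<in> V" "siblings r ?par s u"
      using \<open>u \<in> insert s V\<close> sib unfolding siblings_def by auto
    from s_differs[OF this] obtain x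
      where "x \<in> ancestors ?par s \<inter> ancestors ?par u" "adjtype EB ER s x \<noteq> adjtype EB ER u x"
      by blast
    then show ?thesis using 2 by (intro bexI[of _ x]) auto
  next
    case 3
    then have "siblings r par u v" using sib \<open>s \<notin> V\<close> unfolding siblings_def by (auto split: if_splits)
    then show ?thesis
      using tr 3 anc_V unfolding tree_representation_def by simp
  qed
qed

lemma tree_representation_attach_leaf:
  assumes tr: "tree_representation V EB ER r par" and "s \<notin> V" "p \<in> V"
    and "nbhd (insert s V) EB ER s \<subseteq> ancestors par p \<inter> cnbhd V EB ER p"
    and "simplicial (insert s V) EB ER s"
    and "\<And>c. c \<in> V \<Longrightarrow> c \<noteq> r \<Longrightarrow> par c = p \<Longrightarrow>
      \<exists>x\<in>ancestors par p. adjtype EB ER c x \<noteq> adjtype EB ER s x"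
  shows "tree_representation (insert s V) EB ER r (par(s := p))"
proof -
  have "rooted_tree V r par" using tr unfolding tree_representation_def by simp
  then show ?thesis
    unfolding tree_representation_def
    by (intro conjI ballI impI rooted_tree_fun_upd attach_leaf_clique_condition
        attach_leaf_neighbour_condition attach_leaf_sibling_condition) (use assms in auto)
qed

lemma nbhd_subset_cnbhd_if_same_adjtype:
  assumes "nbhd (insert s V) EB ER s \<subseteq> A" "c \<notin> A"
    and "\<forall>x\<in>A. adjtype EB ER c x = adjtype EB ER s x"
  shows "nbhd (insert s V) EB ER s \<subseteq> cnbhd V EB ER c"
proof
  fix x assume "x \<in> nbhd (insert s V) EB ER s"
  then have "x \<in> V" "x \<in> A" "tadj EB ER s x" using assms(1) unfolding nbhd_def tadj_def by auto
  then have "tadj EB ER c x" using assms(2,3) unfolding tadj_iff_adjtype by auto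
  then show "x \<in> cnbhd V EB ER c" using \<open>x \<in> V\<close> unfolding cnbhd_def nbhd_def by simp
qed

lemma tree_representation_insert_simplicial:
  assumes tr: "tree_representation V EB ER r par" and "finite V" "s \<notin> V"
    and simp_s: "simplicial (insert s V) EB ER s"
  shows "\<exists>par'. tree_representation (insert s V) EB ER r par'"
proof -
  let ?K = "nbhd (insert s V) EB ER s"
  have rt: "rooted_tree V r par" using tr unfolding tree_representation_def by simp
  have "?K \<subseteq> V" unfolding nbhd_def by auto
  define Q where "Q = {q \<in> V. ?K \<subseteq> ancestors par q \<inter> cnbhd V EB ER q}"
  obtain q where "q \<in> V" "?K \<subseteq> ancestors par q \<inter> cnbhd V EB ER q"
    using clique_on_branch[OF tr \<open>finite V\<close> \<open>?K \<subseteq> V\<close>] simp_s unfolding simplicial_def by blast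
  then have "Q \<noteq> {}" unfolding Q_def by blast
  moreover have "Q \<subseteq> V" unfolding Q_def by blast
  ultimately obtain p where "p \<in> Q" and deepest: "\<forall>q\<in>Q. card (ancestors par q) \<le> card (ancestors par p)"
    using exists_deepest[OF rt \<open>finite V\<close>] by blast
  then have "p \<in> V" and K_p: "?K \<subseteq> ancestors par p \<inter> cnbhd V EB ER p" unfolding Q_def by auto
  have "\<exists>x\<in>ancestors par p. adjtype EB ER c x \<noteq> adjtype EB ER s x"
    if "c \<in> V" "c \<noteq> r" "par c = p" for c
  proof (rule ccontr)
    assume "\<not> ?thesis"
    moreover have "c \<notin> ancestors par p"
      using not_in_ancestors_parent[OF rt that(1,2)] \<open>par c = p\<close> by simp
    ultimately have "?K \<subseteq> cnbhd V EB ER c"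
      using nbhd_subset_cnbhd_if_same_adjtype[of s V EB ER "ancestors par p" c] K_p by blast
    moreover have "ancestors par p \<subseteq> ancestors par c"
      using parent_in_ancestors[of par c] \<open>par c = p\<close> ancestors_trans by (metis subsetI)
    ultimately have "c \<in> Q" using K_p \<open>c \<in> V\<close> unfolding Q_def by auto
    then show False
      using deepest card_ancestors_child[OF rt \<open>finite V\<close> that(1,2)] \<open>par c = p\<close> by fastforce
  qed
  then show ?thesis
    using tree_representation_attach_leaf[OF tr \<open>s \<notin> V\<close> \<open>p \<in> V\<close> K_p simp_s] by blast
qed

subsection \<open>Walks and induced paths\<close>

definition walk :: "'a set set \<Rightarrow> 'a set set \<Rightarrow> 'a set \<Rightarrow> 'a \<Rightarrow> 'a \<Rightarrow> 'a list \<Rightarrow> bool" where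
  "walk EB ER A x y xs \<longleftrightarrow>
     xs \<noteq> [] \<and> hd xs = x \<and> last xs = y \<and> set xs \<subseteq> A \<and> successively (tadj EB ER) xs"

definition induced_path :: "'a set set \<Rightarrow> 'a set set \<Rightarrow> 'a list \<Rightarrow> bool" where
  "induced_path EB ER xs \<longleftrightarrow> distinct xs \<and> successively (tadj EB ER) xs \<and>
     (\<forall>i j. Suc i < j \<longrightarrow> j < length xs \<longrightarrow> \<not> tadj EB ER (xs ! i) (xs ! j))"

lemma walk_singleton: "x \<in> A \<Longrightarrow> walk EB ER A x x [x]"
  unfolding walk_def by simp

lemma walk_snoc: "walk EB ER A x y xs \<Longrightarrow> tadj EB ER y z \<Longrightarrow> z \<in> A \<Longrightarrow> walk EB ER A x z (xs @ [z])"
  unfolding walk_def by (auto simp: successively_append_iff)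

lemma walk_Cons: "walk EB ER A y z xs \<Longrightarrow> tadj EB ER x y \<Longrightarrow> x \<in> A \<Longrightarrow> walk EB ER A x z (x # xs)"
  unfolding walk_def by (cases xs) auto

lemma walk_rev: "walk EB ER A x y xs \<Longrightarrow> walk EB ER A y x (rev xs)"
  unfolding walk_def by (simp add: hd_rev last_rev tadj_commute)

lemma walk_append:
  assumes "walk EB ER A x y xs" "walk EB ER A y z ys"
  shows "walk EB ER A x z (xs @ tl ys)"
proof (cases "tl ys = []")
  case True
  then have "ys = [y]" "z = y" using assms(2) unfolding walk_def by (cases ys; simp)+
  then show ?thesis using assms(1) True by simp
next
  case False
  have "ys = y # tl ys" using assms(2) unfolding walk_def by (cases ys) auto
  then have "successively (tadj EB ER) (y # tl ys)" "last (tl ys) = z" "set (tl ys) \<subseteq> A"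
    using assms(2) False unfolding walk_def by (metis, metis last_ConsR, metis set_subset_Cons subset_trans)
  then show ?thesis
    using assms(1) False unfolding walk_def by (auto simp: successively_append_iff successively_Cons)
qed

lemma walk_mono: "walk EB ER A x y xs \<Longrightarrow> A \<subseteq> B \<Longrightarrow> walk EB ER B x y xs"
  unfolding walk_def by blast

lemma walk_splice:
  assumes w: "walk EB ER A x y xs" and "i < j" "j < length xs"
    and junction: "i = 0 \<and> xs ! j = x \<or> 0 < i \<and> tadj EB ER (xs ! (i - 1)) (xs ! j)"
  shows "walk EB ER A x y (take i xs @ drop j xs)"
proof -
  have succ: "successively (tadj EB ER) xs" and "xs \<noteq> []" "hd xs = x" "last xs = y" "set xs \<subseteq> A"
    using w unfolding walk_def by auto
  have "successively (tadj EB ER) (take i xs)" "successively (tadj EB ER) (drop j xs)"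
    using succ unfolding successively_conv_nth by auto
  moreover have "hd (drop j xs) = xs ! j" using \<open>j < length xs\<close> by (simp add: hd_drop_conv_nth)
  moreover have "0 < i \<Longrightarrow> last (take i xs) = xs ! (i - 1)"
    using \<open>i < j\<close> \<open>j < length xs\<close> by (subst last_conv_nth) auto
  moreover have "0 < i \<Longrightarrow> hd (take i xs @ drop j xs) = x"
    using \<open>xs \<noteq> []\<close> \<open>hd xs = x\<close> by simp
  ultimately show ?thesis
    using junction \<open>j < length xs\<close> \<open>last xs = y\<close> \<open>set xs \<subseteq> A\<close>
      set_take_subset[of i xs] set_drop_subset[of j xs]
    unfolding walk_def by (auto simp: successively_append_iff)
qed

lemma walk_shortest_induced_path:
  assumes "walk EB ER A x y xs"
  shows "\<exists>ys. walk EB ER A x y ys \<and> induced_path EB ER ys"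
proof -
  obtain ys where w: "walk EB ER A x y ys"
    and shortest: "\<And>zs. walk EB ER A x y zs \<Longrightarrow> length ys \<le> length zs"
    using ex_has_least_nat[of "walk EB ER A x y" xs length] assms by blast
  have succ: "successively (tadj EB ER) ys" using w unfolding walk_def by simp
  have "ys ! 0 = x" using w unfolding walk_def by (metis hd_conv_nth)
  have no_repeat: "ys ! i \<noteq> ys ! j" if "i < j" "j < length ys" for i j
  proof
    assume eq: "ys ! i = ys ! j"
    have "i = 0 \<and> ys ! j = x \<or> 0 < i \<and> tadj EB ER (ys ! (i - 1)) (ys ! j)"
      using successively_nth[OF succ, of "i - 1"] eq \<open>ys ! 0 = x\<close> that by (cases "i = 0") auto
    then have "walk EB ER A x y (take i ys @ drop j ys)" using walk_splice[OF w that] by blast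
    then show False using shortest[of "take i ys @ drop j ys"] that by simp
  qed
  have no_chord: "\<not> tadj EB ER (ys ! i) (ys ! j)" if "Suc i < j" "j < length ys" for i j
  proof
    assume "tadj EB ER (ys ! i) (ys ! j)"
    then have "walk EB ER A x y (take (Suc i) ys @ drop j ys)" using walk_splice[OF w that] by simp
    then show False using shortest[of "take (Suc i) ys @ drop j ys"] that by simp
  qed
  have "distinct ys"
    unfolding distinct_conv_nth using no_repeat by (metis linorder_neqE_nat)
  then show ?thesis using w succ no_chord unfolding induced_path_def by blast
qed

lemma walk_nonadjacent_length:
  assumes "walk EB ER A x y xs" "x \<noteq> y" "\<not> tadj EB ER x y"
  shows "length xs \<ge> 3"
proof (rule ccontr)
  assume "\<not> length xs \<ge> 3"
  moreover have "xs \<noteq> []" "hd xs = x" "last xs = y" and succ: "successively (tadj EB ER) xs"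
    using assms(1) unfolding walk_def by auto
  moreover have "length xs \<noteq> 0" using \<open>xs \<noteq> []\<close> by simp
  ultimately consider "length xs = 1" | "length xs = 2" by linarith
  then show False
  proof cases
    case 1
    then show False using \<open>hd xs = x\<close> \<open>last xs = y\<close> \<open>x \<noteq> y\<close> by (cases xs) auto
  next
    case 2
    then have "tadj EB ER (hd xs) (last xs)"
      using successively_nth[OF succ, of 0] \<open>xs \<noteq> []\<close> by (simp add: hd_conv_nth last_conv_nth)
    then show False using \<open>hd xs = x\<close> \<open>last xs = y\<close> \<open>\<not> tadj EB ER x y\<close> by simp
  qed
qed

lemma distinct_nth_interior:
  assumes "distinct xs" "0 < i" "i < length xs - 1"
  shows "xs ! i \<noteq> hd xs" "xs ! i \<noteq> last xs"
proof -
  have "xs \<noteq> []" using assms(3) by auto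
  then show "xs ! i \<noteq> hd xs" "xs ! i \<noteq> last xs"
    using assms nth_eq_iff_index_eq[of xs i 0] nth_eq_iff_index_eq[of xs i "length xs - 1"]
    by (auto simp: hd_conv_nth last_conv_nth)
qed

lemma successively_cyclic_nth:
  assumes "successively R (cs @ [hd cs])" "i < length cs"
  shows "R (cs ! i) (cs ! ((i + 1) mod length cs))"
proof (cases "i + 1 < length cs")
  case True
  then show ?thesis using successively_nth[OF assms(1), of i] by (simp add: nth_append)
next
  case False
  then have "i + 1 = length cs" "cs \<noteq> []" using assms(2) by auto
  then show ?thesis
    using successively_nth[OF assms(1), of i] by (simp add: nth_append hd_conv_nth)
qed

lemma induced_path_snoc_no_chord:
  assumes path: "induced_path EB ER xs"
    and interior: "\<And>i. 0 < i \<Longrightarrow> i < length xs - 1 \<Longrightarrow> \<not> tadj EB ER v (xs ! i)"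
    and "Suc i < j" "j \<le> length xs" "\<not> (i = 0 \<and> j = length xs)"
  shows "\<not> tadj EB ER ((xs @ [v]) ! i) ((xs @ [v]) ! j)"
proof (cases "j = length xs")
  case True
  then show ?thesis using interior[of i] assms(3-5) by (simp add: nth_append tadj_commute)
next
  case False
  then show ?thesis using path assms(3,4) unfolding induced_path_def by (simp add: nth_append)
qed

lemma induced_cycle_snoc:
  assumes path: "induced_path EB ER xs" and "length xs \<ge> 3" "set xs \<subseteq> V" "v \<in> V" "v \<notin> set xs"
    and ends: "tadj EB ER v (hd xs)" "tadj EB ER v (last xs)"
    and interior: "\<And>i. 0 < i \<Longrightarrow> i < length xs - 1 \<Longrightarrow> \<not> tadj EB ER v (xs ! i)"
  shows "induced_cycle V EB ER (xs @ [v])"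
proof -
  let ?cs = "xs @ [v]" and ?k = "Suc (length xs)"
  have "xs \<noteq> []" using \<open>length xs \<ge> 3\<close> by auto
  have "successively (tadj EB ER) (?cs @ [hd ?cs])"
    using path ends \<open>xs \<noteq> []\<close> unfolding induced_path_def
    by (simp add: successively_append_iff tadj_commute)
  then have adjacent: "tadj EB ER (?cs ! i) (?cs ! ((i + 1) mod ?k))" if "i < ?k" for i
    using successively_cyclic_nth[of "tadj EB ER" ?cs i] that by simp
  have next_mod: "(i + 1) mod ?k = (if i = length xs then 0 else i + 1)" if "i < ?k" for i
    using that by (cases "i = length xs") auto
  have "\<not> tadj EB ER (?cs ! i) (?cs ! j)" if "i < ?k" "j < ?k" "i \<noteq> j"
    "j \<noteq> (i + 1) mod ?k" "i \<noteq> (j + 1) mod ?k" for i j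
  proof (cases "i < j")
    case True
    then show ?thesis
      using induced_path_snoc_no_chord[OF path interior, of i j] that next_mod by (auto split: if_splits)
  next
    case False
    then have "\<not> tadj EB ER (?cs ! j) (?cs ! i)"
      using induced_path_snoc_no_chord[OF path interior, of j i] that next_mod by (auto split: if_splits)
    then show ?thesis by (simp add: tadj_commute)
  qed
  moreover have "distinct ?cs" "set ?cs \<subseteq> V"
    using path \<open>v \<notin> set xs\<close> \<open>set xs \<subseteq> V\<close> \<open>v \<in> V\<close> unfolding induced_path_def by auto
  ultimately show ?thesis
    using adjacent \<open>length xs \<ge> 3\<close> unfolding induced_cycle_def Let_def by simp
qed

lemma chordal_neighbours_adjacent:
  assumes chordal: "chordal_trigraph V EB ER" and "v \<in> V"
    and xy: "x \<in> nbhd V EB ER v" "y \<in> nbhd V EB ER v" "x \<noteq> y"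
    and ws: "walk EB ER (V - cnbhd V EB ER v) c d ws" "tadj EB ER x c" "tadj EB ER d y"
  shows "tadj EB ER x y"
proof (rule ccontr)
  assume "\<not> tadj EB ER x y"
  let ?D = "V - cnbhd V EB ER v"
  let ?A = "insert x (insert y ?D)"
  have "walk EB ER ?A c d ws" using walk_mono[OF ws(1)] by (simp add: subset_insertI2)
  then have "walk EB ER ?A c y (ws @ [y])" using walk_snoc ws(3) by fastforce
  then have "walk EB ER ?A x y (x # ws @ [y])" using walk_Cons ws(2) by fastforce
  from walk_shortest_induced_path[OF this]
  obtain ys where w: "walk EB ER ?A x y ys" and path: "induced_path EB ER ys" by blast
  have "length ys \<ge> 3" using walk_nonadjacent_length[OF w \<open>x \<noteq> y\<close> \<open>\<not> tadj EB ER x y\<close>] .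
  have ends: "hd ys = x" "last ys = y" and "set ys \<subseteq> ?A" using w unfolding walk_def by auto
  have "\<not> tadj EB ER v (ys ! i)" if "0 < i" "i < length ys - 1" for i
  proof -
    have "ys ! i \<noteq> x" "ys ! i \<noteq> y"
      using distinct_nth_interior[OF _ that] path ends unfolding induced_path_def by auto
    moreover have "ys ! i \<in> ?A" using \<open>set ys \<subseteq> ?A\<close> that by (simp add: subset_iff)
    ultimately show ?thesis unfolding cnbhd_def nbhd_def by auto
  qed
  moreover have "v \<notin> set ys" "set ys \<subseteq> V"
    using \<open>set ys \<subseteq> ?A\<close> xy unfolding cnbhd_def nbhd_def by auto
  moreover have "tadj EB ER v (hd ys)" "tadj EB ER v (last ys)"
    using xy ends unfolding nbhd_def by auto
  ultimately have "induced_cycle V EB ER (ys @ [v])"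
    using induced_cycle_snoc[OF path \<open>length ys \<ge> 3\<close>] \<open>v \<in> V\<close> by simp
  then show False using chordal unfolding chordal_trigraph_def by blast
qed

subsection \<open>Simplicial vertices in chordal trigraphs\<close>

definition component :: "'a set set \<Rightarrow> 'a set set \<Rightarrow> 'a set \<Rightarrow> 'a \<Rightarrow> 'a set" where
  "component EB ER A u = {c. \<exists>xs. walk EB ER A u c xs}"

definition boundary :: "'a set \<Rightarrow> 'a set set \<Rightarrow> 'a set set \<Rightarrow> 'a set \<Rightarrow> 'a set" where
  "boundary V EB ER C = {z \<in> V - C. \<exists>c\<in>C. tadj EB ER z c}"

lemma component_subset: "component EB ER A u \<subseteq> A"
  unfolding component_def walk_def by (auto dest: last_in_set)

lemma self_in_component: "u \<in> A \<Longrightarrow> u \<in> component EB ER A u"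
  unfolding component_def using walk_singleton by (intro CollectI exI)

lemma component_closed:
  assumes "c \<in> component EB ER A u" "d \<in> A" "tadj EB ER c d"
  shows "d \<in> component EB ER A u"
proof -
  obtain xs where "walk EB ER A u c xs" using assms(1) unfolding component_def by blast
  from walk_snoc[OF this assms(3,2)] have "walk EB ER A u d (xs @ [d])" .
  then show ?thesis unfolding component_def by blast
qed

lemma component_walk:
  assumes "c \<in> component EB ER A u" "d \<in> component EB ER A u"
  shows "\<exists>ws. walk EB ER A c d ws"
proof -
  obtain xs ys where xs: "walk EB ER A u c xs" and ys: "walk EB ER A u d ys"
    using assms unfolding component_def by blast
  show ?thesis using walk_append[OF walk_rev[OF xs] ys] by blast
qed

lemma nbhd_component_boundary:
  assumes "C \<subseteq> V" "w \<in> C"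
  shows "nbhd (C \<union> boundary V EB ER C) EB ER w = nbhd V EB ER w"
  using assms unfolding boundary_def nbhd_def by (auto simp: tadj_commute)

lemma boundary_component_subset_nbhd:
  "boundary V EB ER (component EB ER (V - cnbhd V EB ER v) u) \<subseteq> nbhd V EB ER v"
proof
  let ?C = "component EB ER (V - cnbhd V EB ER v) u"
  fix z assume "z \<in> boundary V EB ER ?C"
  then obtain c where "z \<in> V" "z \<notin> ?C" "c \<in> ?C" "tadj EB ER z c"
    unfolding boundary_def by blast
  moreover have "c \<in> V - cnbhd V EB ER v" using \<open>c \<in> ?C\<close> component_subset by fast
  moreover have "tadj EB ER c z" using \<open>tadj EB ER z c\<close> by (simp add: tadj_commute)
  ultimately have "z \<notin> V - cnbhd V EB ER v" using component_closed[OF \<open>c \<in> ?C\<close> _ \<open>tadj EB ER c z\<close>] by blast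
  then have "z \<in> cnbhd V EB ER v" using \<open>z \<in> V\<close> by blast
  moreover have "z \<noteq> v"
    using \<open>tadj EB ER z c\<close> \<open>c \<in> V - cnbhd V EB ER v\<close> unfolding cnbhd_def nbhd_def by auto
  ultimately show "z \<in> nbhd V EB ER v" unfolding cnbhd_def by simp
qed

lemma boundary_component_clique:
  assumes "chordal_trigraph V EB ER" "v \<in> V"
  shows "is_clique EB ER (boundary V EB ER (component EB ER (V - cnbhd V EB ER v) u))"
  unfolding is_clique_def
proof (intro ballI impI)
  let ?C = "component EB ER (V - cnbhd V EB ER v) u"
  fix x y assume x: "x \<in> boundary V EB ER ?C" and y: "y \<in> boundary V EB ER ?C" and "x \<noteq> y"
  obtain c d where c: "c \<in> ?C" "tadj EB ER x c" and d: "d \<in> ?C" "tadj EB ER d y"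
    using x y unfolding boundary_def by (auto simp: tadj_commute)
  obtain ws where ws: "walk EB ER (V - cnbhd V EB ER v) c d ws"
    using component_walk[OF c(1) d(1)] by blast
  have "x \<in> nbhd V EB ER v" "y \<in> nbhd V EB ER v"
    using x y boundary_component_subset_nbhd[of V EB ER v u] by (simp_all add: subset_iff)
  then show "tadj EB ER x y"
    using chordal_neighbours_adjacent[OF assms _ _ \<open>x \<noteq> y\<close> ws c(2) d(2)] by blast
qed

lemma component_boundary_psubset:
  assumes "v \<in> V"
  shows "component EB ER (V - cnbhd V EB ER v) u \<union> boundary V EB ER (component EB ER (V - cnbhd V EB ER v) u) \<subset> V"
proof -
  let ?C = "component EB ER (V - cnbhd V EB ER v) u"
  have "?C \<subseteq> V - cnbhd V EB ER v" by (rule component_subset)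
  moreover have "boundary V EB ER ?C \<subseteq> nbhd V EB ER v" by (rule boundary_component_subset_nbhd)
  ultimately have "v \<notin> ?C \<union> boundary V EB ER ?C" unfolding cnbhd_def nbhd_def by auto
  moreover have "?C \<union> boundary V EB ER ?C \<subseteq> V"
    using component_subset[of EB ER "V - cnbhd V EB ER v" u] unfolding boundary_def by blast
  ultimately show ?thesis using \<open>v \<in> V\<close> by blast
qed

lemma simplicial_outside_clique:
  assumes nonadjacent_simplicial: "\<And>a b. a \<in> W \<Longrightarrow> b \<in> W - cnbhd W EB ER a \<Longrightarrow>
      \<exists>w\<in>W - cnbhd W EB ER a. simplicial W EB ER w"
    and "is_clique EB ER S" "u \<in> W - S"
  shows "\<exists>w\<in>W - S. simplicial W EB ER w"
proof (cases "\<forall>a\<in>W. W \<subseteq> cnbhd W EB ER a")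
  case True
  then show ?thesis using simplicial_if_complete[OF True] \<open>u \<in> W - S\<close> by blast
next
  case False
  then obtain a b where "a \<in> W" "b \<in> W - cnbhd W EB ER a" by blast
  then obtain w1 where w1: "w1 \<in> W - cnbhd W EB ER a" "simplicial W EB ER w1"
    using nonadjacent_simplicial by blast
  then have "a \<in> W - cnbhd W EB ER w1" using cnbhd_commute[of w1 W a] \<open>a \<in> W\<close> by blast
  then obtain w2 where w2: "w2 \<in> W - cnbhd W EB ER w1" "simplicial W EB ER w2"
    using nonadjacent_simplicial w1(1) by blast
  have "w1 \<noteq> w2" "\<not> tadj EB ER w1 w2" using w2(1) unfolding cnbhd_def nbhd_def by auto
  then have "w1 \<notin> S \<or> w2 \<notin> S" using \<open>is_clique EB ER S\<close> unfolding is_clique_def by blast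
  then show ?thesis using w1 w2 by blast
qed

lemma exists_simplicial_nonadjacent:
  assumes "finite V" "chordal_trigraph V EB ER" "v \<in> V" "u \<in> V - cnbhd V EB ER v"
  shows "\<exists>w\<in>V - cnbhd V EB ER v. simplicial V EB ER w"
  using assms
proof (induction "card V" arbitrary: V v u rule: less_induct)
  case less
  define C where "C = component EB ER (V - cnbhd V EB ER v) u"
  define V' where "V' = C \<union> boundary V EB ER C"
  have "C \<subseteq> V - cnbhd V EB ER v" unfolding C_def by (rule component_subset)
  have "V' \<subset> V" unfolding V'_def C_def by (rule component_boundary_psubset[OF less.prems(3)])
  then have "card V' < card V" by (rule psubset_card_mono[OF less.prems(1)])
  moreover have "finite V'" using \<open>V' \<subset> V\<close> less.prems(1) finite_subset by blast
  moreover have "chordal_trigraph V' EB ER"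
    using chordal_trigraph_subset[OF less.prems(2)] \<open>V' \<subset> V\<close> by blast
  ultimately have IH: "\<exists>w\<in>V' - cnbhd V' EB ER a. simplicial V' EB ER w"
    if "a \<in> V'" "b \<in> V' - cnbhd V' EB ER a" for a b
    using less.hyps that by blast
  have "is_clique EB ER (boundary V EB ER C)"
    unfolding C_def by (rule boundary_component_clique[OF less.prems(2,3)])
  have V'_minus_boundary: "V' - boundary V EB ER C = C" unfolding V'_def boundary_def by blast
  have "u \<in> C" unfolding C_def by (rule self_in_component[OF less.prems(4)])
  then have "u \<in> V' - boundary V EB ER C" using V'_minus_boundary by simp
  with IH \<open>is_clique EB ER (boundary V EB ER C)\<close>
  have "\<exists>w\<in>V' - boundary V EB ER C. simplicial V' EB ER w"
    by (rule simplicial_outside_clique)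
  then obtain w where "w \<in> C" "simplicial V' EB ER w" unfolding V'_minus_boundary by blast
  moreover have "C \<subseteq> V" using \<open>C \<subseteq> V - cnbhd V EB ER v\<close> by blast
  ultimately have "simplicial V EB ER w"
    using nbhd_component_boundary unfolding simplicial_def V'_def by metis
  then show ?case using \<open>w \<in> C\<close> \<open>C \<subseteq> V - cnbhd V EB ER v\<close> by blast
qed

lemma exists_simplicial:
  assumes "finite V" "V \<noteq> {}" "chordal_trigraph V EB ER"
  shows "\<exists>s\<in>V. simplicial V EB ER s"
proof (cases "\<forall>a\<in>V. V \<subseteq> cnbhd V EB ER a")
  case True
  then show ?thesis using simplicial_if_complete[OF True] \<open>V \<noteq> {}\<close> by blast
next
  case False
  then obtain v u where "v \<in> V" "u \<in> V - cnbhd V EB ER v" by blast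
  then show ?thesis using exists_simplicial_nonadjacent[OF assms(1,3), of v u] by blast
qed

lemma singleton_tree_representation: "tree_representation {s} EB ER s (\<lambda>_. s)"
proof -
  have "nbhd {s} EB ER s = {}" unfolding nbhd_def by simp
  moreover have "ancestors (\<lambda>_. s) s = {s}"
    unfolding ancestors_def using funpow_fixpoint[of "\<lambda>_. s" s] by auto
  ultimately show ?thesis
    unfolding tree_representation_def rooted_tree_def siblings_def is_clique_def
    by (auto intro: exI[of _ 0])
qed

lemma chordal_trigraph_has_tree_representation:
  assumes "finite V" "V \<noteq> {}" "chordal_trigraph V EB ER"
  shows "\<exists>r par. tree_representation V EB ER r par"
  using assms
proof (induction "card V" arbitrary: V rule: less_induct)
  case less
  obtain s where "s \<in> V" "simplicial V EB ER s"
    using exists_simplicial[OF less.prems] by blast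
  show ?case
  proof (cases "V = {s}")
    case True
    then show ?thesis using singleton_tree_representation[of s EB ER] by auto
  next
    case False
    let ?V = "V - {s}"
    have "card ?V < card V" using card_Diff1_less[OF less.prems(1) \<open>s \<in> V\<close>] .
    moreover have "finite ?V" "?V \<noteq> {}" using less.prems(1) \<open>s \<in> V\<close> False by auto
    moreover have "chordal_trigraph ?V EB ER"
      using chordal_trigraph_subset[OF less.prems(3) Diff_subset] .
    ultimately obtain r par where "tree_representation ?V EB ER r par"
      using less.hyps[of ?V] by blast
    moreover have "insert s ?V = V" using \<open>s \<in> V\<close> by blast
    ultimately show ?thesis
      using tree_representation_insert_simplicial[of ?V EB ER r par s] \<open>finite ?V\<close>
        \<open>simplicial V EB ER s\<close> by auto
  qed
qed

theorem lemma3p1: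
  fixes V :: "'a set" and EB ER :: "'a set set"
  assumes "finite V" and "V \<noteq> {}"
    and "trigraph V EB ER"
    and "chordal_trigraph V EB ER"
  shows "\<exists>r par. tree_representation V EB ER r par"
  using chordal_trigraph_has_tree_representation assms(1,2,4) by blast

end
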